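(* Let $n$ and $k$ be even integers with $1\le k<n/2$. Then $B(n,k)\neq C(n,k)$ if and only if $k^2\equiv\pm1\pmod{n/2}$. Moreover, if $k^2\equiv1\pmod{n/2}$ then $B(n,k)=\langle C(n,k),\lambda\rangle=\langle\rho,\delta,\beta,\lambda\rangle$, and if $k^2\equiv-1\pmod{n/2}$ then $B(n,k)=\langle C(n,k),\tau\rangle=\langle\rho,\delta,\beta,\tau\rangle$.
   Context: $\mathrm{DGP}(n,k)$ ($1\le k<n/2$) is the graph with vertex set $\{(u_i,j),(v_i,j): 0\le i\le n-1,\ j\in\{0,1\}\}$ and edges $\{(u_i,j),(u_{i+1},1-j)\}$ (outer edges, set $\mathcal{O}$), $\{(u_i,j),(v_i,1-j)\}$ (spokes, set $\mathcal{S}$), $\{(v_i,j),(v_{i+k},1-j)\}$ (inner edges, set $\mathcal{I}$), subscripts mod $n$ (the canonical double cover of $\mathrm{GP}(n,k)$). $A(n,k)$ is its automorphism group, $B(n,k)$ the setwise stabilizer of $\mathcal{S}$ in $A(n,k)$, and $C(n,k)$ the subgroup of $A(n,k)$ stabilizing each of $\mathcal{O},\mathcal{I},\mathcal{S}$ setwise. Permutations: $(u_i,j)^\rho=(u_{i+1},j)$, $(v_i,j)^\rho=(v_{i+1},j)$; $(u_i,j)^\delta=(u_{-i},j)$, $(v_i,j)^\delta=(v_{-i},j)$; $(u_i,j)^\beta=(u_i,1-j)$, $(v_i,j)^\beta=(v_i,1-j)$. $\lambda$: if $i+j$ odd, $(u_i,j)\mapsto(v_{1+(i-k)k},j)$,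 $(v_i,j)\mapsto(u_{ik},j)$; if $i+j$ even, $(u_i,j)\mapsto(v_{ik},j)$, $(v_i,j)\mapsto(u_{1+(i-k)k},j)$. $\tau$: if $i+j$ odd, $(u_i,j)\mapsto(v_{-1+(i-k)k},j)$, $(v_i,j)\mapsto(u_{ik},j)$; if $i+j$ even, $(u_i,j)\mapsto(v_{ik},j)$, $(v_i,j)\mapsto(u_{-1+(i-k)k},j)$. *)

theory Defs
  imports "HOL-Algebra.Algebra" "HOL-Number_Theory.Cong"
begin

text \<open>Vertices of DGP(n,k): Uv i j stands for (u_i, j), Vv i j for (v_i, j),
  with indices i in {0..n-1} (integers, taken mod n) and j in {0,1}.\<close>

datatype dvert = Uv int int | Vv int int

definition dgp_verts :: "int \<Rightarrow> dvert set" where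
  "dgp_verts n = {Uv i j | i j. 0 \<le> i \<and> i < n \<and> j \<in> {0,1}}
               \<union> {Vv i j | i j. 0 \<le> i \<and> i < n \<and> j \<in> {0,1}}"

definition dgp_outer :: "int \<Rightarrow> dvert set set" where
  "dgp_outer n = {{Uv i j, Uv ((i+1) mod n) (1-j)} | i j. 0 \<le> i \<and> i < n \<and> j \<in> {0,1}}"

definition dgp_spokes :: "int \<Rightarrow> dvert set set" where
  "dgp_spokes n = {{Uv i j, Vv i (1-j)} | i j. 0 \<le> i \<and> i < n \<and> j \<in> {0,1}}"

definition dgp_inner :: "int \<Rightarrow> int \<Rightarrow> dvert set set" where
  "dgp_inner n k = {{Vv i j, Vv ((i+k) mod n) (1-j)} | i j. 0 \<le> i \<and> i < n \<and> j \<in> {0,1}}"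

definition dgp_edges :: "int \<Rightarrow> int \<Rightarrow> dvert set set" where
  "dgp_edges n k = dgp_outer n \<union> dgp_spokes n \<union> dgp_inner n k"

abbreviation dgp_sym :: "int \<Rightarrow> (dvert \<Rightarrow> dvert) monoid" where
  "dgp_sym n \<equiv> BijGroup (dgp_verts n)"

definition autA :: "int \<Rightarrow> int \<Rightarrow> (dvert \<Rightarrow> dvert) set" where
  "autA n k = {f \<in> Bij (dgp_verts n).
     \<forall>x\<in>dgp_verts n. \<forall>y\<in>dgp_verts n.
       ({x, y} \<in> dgp_edges n k \<longleftrightarrow> {f x, f y} \<in> dgp_edges n k)}"

definition edge_image :: "(dvert \<Rightarrow> dvert) \<Rightarrow> dvert set set \<Rightarrow> dvert set set" where
  "edge_image f E = (\<lambda>e. f ` e) ` E"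

definition autB :: "int \<Rightarrow> int \<Rightarrow> (dvert \<Rightarrow> dvert) set" where
  "autB n k = {f \<in> autA n k. edge_image f (dgp_spokes n) = dgp_spokes n}"

definition autC :: "int \<Rightarrow> int \<Rightarrow> (dvert \<Rightarrow> dvert) set" where
  "autC n k = {f \<in> autA n k. edge_image f (dgp_outer n) = dgp_outer n
                            \<and> edge_image f (dgp_inner n k) = dgp_inner n k
                            \<and> edge_image f (dgp_spokes n) = dgp_spokes n}"

definition rho :: "int \<Rightarrow> dvert \<Rightarrow> dvert" where
  "rho n = restrict (\<lambda>x. case x of Uv i j \<Rightarrow> Uv ((i+1) mod n) j
                                  | Vv i j \<Rightarrow> Vv ((i+1) mod n) j) (dgp_verts n)"

definition delta :: "int \<Rightarrow> dvert \<Rightarrow> dvert" where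
  "delta n = restrict (\<lambda>x. case x of Uv i j \<Rightarrow> Uv ((- i) mod n) j
                                    | Vv i j \<Rightarrow> Vv ((- i) mod n) j) (dgp_verts n)"

definition beta :: "int \<Rightarrow> dvert \<Rightarrow> dvert" where
  "beta n = restrict (\<lambda>x. case x of Uv i j \<Rightarrow> Uv i (1-j)
                                   | Vv i j \<Rightarrow> Vv i (1-j)) (dgp_verts n)"

definition lam :: "int \<Rightarrow> int \<Rightarrow> dvert \<Rightarrow> dvert" where
  "lam n k = restrict (\<lambda>x. case x of
       Uv i j \<Rightarrow> (if odd (i+j) then Vv ((1 + (i-k)*k) mod n) j else Vv ((i*k) mod n) j)
     | Vv i j \<Rightarrow> (if odd (i+j) then Uv ((i*k) mod n) j else Uv ((1 + (i-k)*k) mod n) j))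
     (dgp_verts n)"

definition tau :: "int \<Rightarrow> int \<Rightarrow> dvert \<Rightarrow> dvert" where
  "tau n k = restrict (\<lambda>x. case x of
       Uv i j \<Rightarrow> (if odd (i+j) then Vv ((-1 + (i-k)*k) mod n) j else Vv ((i*k) mod n) j)
     | Vv i j \<Rightarrow> (if odd (i+j) then Uv ((i*k) mod n) j else Uv ((-1 + (i-k)*k) mod n) j))
     (dgp_verts n)"

end

theory Submission
  imports Defs
begin

text \<open>An element of \<open>B(n,k)\<close> maps spokes to spokes and hence non-spokes to non-spokes; as
  the spokes are exactly the edges between outer and inner vertices and the graph is
  connected, it either keeps both sides or swaps them, and in the first case it lies in
  \<open>C(n,k)\<close>. A side-swapping automorphism carries the outer cycle onto an inner walk whose
  steps are all \<open>k\<close> or all \<open>-k\<close>; following the spokes, the two inner neighbours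
  \<open>v\<^sub>k, v\<^sub>-\<^sub>k\<close> of \<open>v\<^sub>0\<close> land on the two outer neighbours of one outer vertex, which
  forces \<open>2k\<^sup>2 \<equiv> \<plusminus>2 (mod n)\<close>, i.e. \<open>k\<^sup>2 \<equiv> \<plusminus>1 (mod n/2)\<close>. Conversely \<open>\<lambda>\<close> (for \<open>+1\<close>)
  and \<open>\<tau>\<close> (for \<open>-1\<close>) are side-swapping elements of \<open>B(n,k)\<close>, and composing any swap
  with them lands in \<open>C(n,k)\<close>. Finally \<open>C(n,k) = \<langle>\<rho>, \<delta>, \<beta>\<rangle>\<close>: these move any outer
  edge to \<open>{(u\<^sub>0,0), (u\<^sub>1,1)}\<close>, and an element of \<open>C(n,k)\<close> fixing that edge fixes the outer
  cycle, the spokes, and then the inner vertices because \<open>n\<close> does not divide \<open>4k\<close>.\<close>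

section \<open>Edge stabilizers and walks\<close>

lemma carrier_BijGroup [simp]: "carrier (BijGroup S) = Bij S"
  by (simp add: BijGroup_def)

lemma BijGroup_one: "\<one>\<^bsub>BijGroup S\<^esub> = (\<lambda>x\<in>S. x)"
  by (simp add: BijGroup_def)

lemma BijGroup_mult_apply:
  "f \<in> Bij S \<Longrightarrow> g \<in> Bij S \<Longrightarrow> x \<in> S \<Longrightarrow> (f \<otimes>\<^bsub>BijGroup S\<^esub> g) x = f (g x)"
  by (simp add: BijGroup_def compose_def)

lemma (in group) subgroup_mem_of_mult:
  assumes H: "subgroup H G" and h: "h \<in> H" and f: "f \<in> carrier G" and hf: "h \<otimes> f \<in> H"
  shows "f \<in> H"
proof -
  have "f = inv h \<otimes> (h \<otimes> f)"
    using inv_solve_left[of f h "h \<otimes> f"] subgroup.mem_carrier[OF H h] f by simp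
  then show ?thesis
    using subgroup.m_closed[OF H subgroup.m_inv_closed[OF H h] hf] by simp
qed

definition pairs_in :: "'a set \<Rightarrow> 'a set set" where
  "pairs_in V = {{x, y} | x y. x \<in> V \<and> y \<in> V}"

definition edge_stabilizer :: "'a set \<Rightarrow> 'a set set \<Rightarrow> ('a \<Rightarrow> 'a) set" where
  "edge_stabilizer V E = {f \<in> Bij V. \<forall>x\<in>V. \<forall>y\<in>V. {x, y} \<in> E \<longleftrightarrow> {f x, f y} \<in> E}"

lemma subgroup_edge_stabilizer: "subgroup (edge_stabilizer V E) (BijGroup V)"
proof (rule group.subgroupI[OF group_BijGroup])
  show "edge_stabilizer V E \<subseteq> carrier (BijGroup V)"
    by (auto simp: edge_stabilizer_def)
  have "(\<lambda>x\<in>V. x) \<in> edge_stabilizer V E"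
    by (simp add: edge_stabilizer_def id_Bij)
  then show "edge_stabilizer V E \<noteq> {}" by blast
next
  fix f assume f: "f \<in> edge_stabilizer V E"
  then have fB: "f \<in> Bij V" by (simp add: edge_stabilizer_def)
  let ?g = "\<lambda>x\<in>V. inv_into V f x"
  have g: "?g x \<in> V" "f (?g x) = x" if "x \<in> V" for x
    using that fB by (auto simp: Bij_def bij_betw_def inv_into_into f_inv_into_f)
  have "?g \<in> edge_stabilizer V E"
    unfolding edge_stabilizer_def
  proof (intro CollectI conjI ballI restrict_inv_into_Bij[OF fB])
    fix x y assume "x \<in> V" "y \<in> V"
    then show "{x, y} \<in> E \<longleftrightarrow> {?g x, ?g y} \<in> E"
      using f g[of x] g[of y] by (auto simp: edge_stabilizer_def)
  qed
  then show "inv\<^bsub>BijGroup V\<^esub> f \<in> edge_stabilizer V E"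
    by (simp add: inv_BijGroup[OF fB])
next
  fix f g assume f: "f \<in> edge_stabilizer V E" and g: "g \<in> edge_stabilizer V E"
  then have fB: "f \<in> Bij V" and gB: "g \<in> Bij V" by (simp_all add: edge_stabilizer_def)
  have "f \<otimes>\<^bsub>BijGroup V\<^esub> g \<in> Bij V"
    using group.is_monoid[OF group_BijGroup] monoid.m_closed fB gB by fastforce
  moreover have "g x \<in> V" if "x \<in> V" for x
    using Bij_imp_funcset[OF gB] that by blast
  ultimately show "f \<otimes>\<^bsub>BijGroup V\<^esub> g \<in> edge_stabilizer V E"
    using f g fB gB by (simp add: edge_stabilizer_def BijGroup_mult_apply)
qed

lemma pairs_in_memD: "{x, y} \<in> pairs_in V \<Longrightarrow> x \<in> V \<and> y \<in> V"
  by (auto simp: pairs_in_def doubleton_eq_iff)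

lemma edge_stabilizer_edge:
  "f \<in> edge_stabilizer V E \<Longrightarrow> E \<subseteq> pairs_in V \<Longrightarrow> {x, y} \<in> E \<Longrightarrow> {f x, f y} \<in> E"
  using pairs_in_memD[of x y V] unfolding edge_stabilizer_def by blast

lemma edge_stabilizer_edge_rev:
  "f \<in> edge_stabilizer V E \<Longrightarrow> x \<in> V \<Longrightarrow> y \<in> V \<Longrightarrow> {f x, f y} \<in> E \<Longrightarrow> {x, y} \<in> E"
  unfolding edge_stabilizer_def by blast

lemma edge_image_doubleton: "{x, y} \<in> E \<Longrightarrow> {f x, f y} \<in> edge_image f E"
  unfolding edge_image_def by (metis image_empty image_eqI image_insert)

lemma edge_image_eq_iff:
  assumes f: "f \<in> Bij V" and E: "E \<subseteq> pairs_in V"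
  shows "edge_image f E = E \<longleftrightarrow> (\<forall>x\<in>V. \<forall>y\<in>V. {x, y} \<in> E \<longleftrightarrow> {f x, f y} \<in> E)"
proof
  have inj: "inj_on f V" using f by (simp add: Bij_def bij_betw_def)
  assume eq: "edge_image f E = E"
  show "\<forall>x\<in>V. \<forall>y\<in>V. {x, y} \<in> E \<longleftrightarrow> {f x, f y} \<in> E"
  proof (intro ballI iffI)
    fix x y assume "{x, y} \<in> E"
    then show "{f x, f y} \<in> E" using eq edge_image_doubleton by blast
  next
    fix x y assume xy: "x \<in> V" "y \<in> V" and "{f x, f y} \<in> E"
    then obtain e where e: "e \<in> E" "f ` e = {f x, f y}"
      using eq unfolding edge_image_def by (metis imageE)
    then obtain a b where ab: "e = {a, b}" "a \<in> V" "b \<in> V"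
      using E unfolding pairs_in_def by blast
    then have "f ` {a, b} = f ` {x, y}" using e by simp
    then have "{a, b} = {x, y}"
      using inj_on_image_eq_iff[OF inj, of "{a, b}" "{x, y}"] ab xy by simp
    then show "{x, y} \<in> E" using e ab by simp
  qed
next
  have surj: "f ` V = V" using f by (simp add: Bij_def bij_betw_def)
  assume P: "\<forall>x\<in>V. \<forall>y\<in>V. {x, y} \<in> E \<longleftrightarrow> {f x, f y} \<in> E"
  show "edge_image f E = E"
  proof (intro equalityI subsetI)
    fix e assume "e \<in> edge_image f E"
    then obtain e' where e': "e' \<in> E" "e = f ` e'" unfolding edge_image_def by blast
    then obtain a b where "e' = {a, b}" "a \<in> V" "b \<in> V"
      using E unfolding pairs_in_def by blast
    then show "e \<in> E" using P e' by simp
  next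
    fix e assume e: "e \<in> E"
    then obtain a b where ab: "e = {a, b}" "a \<in> V" "b \<in> V"
      using E unfolding pairs_in_def by blast
    then obtain a' b' where "a' \<in> V" "b' \<in> V" "a = f a'" "b = f b'"
      using surj by (metis imageE)
    then show "e \<in> edge_image f E"
      using P e ab edge_image_doubleton[of a' b' E f] by simp
  qed
qed

lemma edge_stabilizerI_finite:
  fixes f :: "dvert \<Rightarrow> dvert"
  assumes fin: "finite V" and ext: "f \<in> extensional V" and into: "f ` V \<subseteq> V"
    and inj: "inj_on f V" and E: "E \<subseteq> pairs_in V"
    and maps: "\<And>x y. {x, y} \<in> E \<Longrightarrow> {f x, f y} \<in> E"
  shows "f \<in> edge_stabilizer V E"
proof -
  have fB: "f \<in> Bij V"
    using ext inj endo_inj_surj[OF fin into inj] by (simp add: Bij_def bij_betw_def)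
  have EV: "E \<subseteq> Pow V" using E unfolding pairs_in_def by auto
  have "edge_image f E \<subseteq> E"
  proof
    fix e assume "e \<in> edge_image f E"
    then obtain e' where e': "e' \<in> E" "e = f ` e'" unfolding edge_image_def by blast
    then obtain a b where "e' = {a, b}"
      using E unfolding pairs_in_def by blast
    then show "e \<in> E" using maps e' by simp
  qed
  moreover have "inj_on (\<lambda>e. f ` e) E"
  proof (rule inj_onI)
    fix e e' assume "e \<in> E" "e' \<in> E" "f ` e = f ` e'"
    then show "e = e'" using EV inj_on_image_eq_iff[OF inj, of e e'] by blast
  qed
  moreover have "finite E" using EV fin by (meson finite_Pow_iff finite_subset)
  ultimately have "edge_image f E = E"
    unfolding edge_image_def using card_image card_subset_eq by metis
  then show ?thesis
    using edge_image_eq_iff[OF fB E] fB by (simp add: edge_stabilizer_def)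
qed

lemma nonbacktracking_walk_eq_nonneg:
  fixes P g :: "int \<Rightarrow> 'a"
  assumes adj: "\<And>x y. {P x, y} \<in> R \<Longrightarrow> y = P (x + 1) \<or> y = P (x - 1)"
    and walk: "\<And>m. {g m, g (m + 1)} \<in> R" and nonback: "\<And>m. g (m + 1) \<noteq> g (m - 1)"
    and g0: "g 0 = P 0" and g1: "g 1 = P 1" and m: "0 \<le> m"
  shows "g m = P m \<and> g (m + 1) = P (m + 1)"
  using m
proof (induction m rule: int_ge_induct)
  case base
  then show ?case using g0 g1 by simp
next
  case (step m)
  then have "{P (m + 1), g (m + 1 + 1)} \<in> R" using walk[of "m + 1"] by simp
  then have "g (m + 1 + 1) = P (m + 1 + 1) \<or> g (m + 1 + 1) = P m"
    using adj by fastforce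
  then show ?case using step nonback[of "m + 1"] by auto
qed

lemma nonbacktracking_walk_eq:
  fixes P g :: "int \<Rightarrow> 'a"
  assumes adj: "\<And>x y. {P x, y} \<in> R \<Longrightarrow> y = P (x + 1) \<or> y = P (x - 1)"
    and walk: "\<And>m. {g m, g (m + 1)} \<in> R" and nonback: "\<And>m. g (m + 1) \<noteq> g (m - 1)"
    and g0: "g 0 = P 0" and g1: "g 1 = P 1"
  shows "g m = P m"
proof (cases "0 \<le> m")
  case True
  then show ?thesis using nonbacktracking_walk_eq_nonneg[OF adj walk nonback g0 g1] by blast
next
  case False
  have "g (1 - (1 - m)) = P (1 - (1 - m))"
  proof (rule conjunct1[OF nonbacktracking_walk_eq_nonneg[where P = "\<lambda>x. P (1 - x)"]])
    show "{P (1 - x), y} \<in> R \<Longrightarrow> y = P (1 - (x + 1)) \<or> y = P (1 - (x - 1))" for x y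
      using adj[of "1 - x" y] by (auto simp: algebra_simps)
    show "{g (1 - m'), g (1 - (m' + 1))} \<in> R" for m'
      using walk[of "- m'"] by (simp add: insert_commute)
    show "g (1 - (m' + 1)) \<noteq> g (1 - (m' - 1))" for m'
      using nonback[of "1 - m'"] by (simp add: algebra_simps)
  qed (use g0 g1 False in simp_all)
  then show ?thesis by simp
qed

section \<open>Coordinates on DGP(n,k)\<close>

locale even_dgp =
  fixes n k :: int
  assumes n_even: "even n" and k_even: "even k" and k_pos: "1 \<le> k" and k_small: "2 * k < n"
begin

lemma n_ge_6: "n \<ge> 6"
  using k_even k_pos k_small n_even by presburger

lemma n_pos: "n > 0"
  using n_ge_6 by simp

lemma n_eq_double_half: "n = 2 * (n div 2)"
  using n_even by simp

lemma half_dvd_of_dvd_double: "n dvd 2 * z \<Longrightarrow> n div 2 dvd z"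
  using n_eq_double_half by (metis dvd_times_left_cancel_iff zero_neq_numeral)

text \<open>Then outer edges are \<open>{U m e, U (m + 1) e}\<close>, spokes
  \<open>{U m e, V m (e + 1)}\<close>, inner edges \<open>{V m e, V (m + k) (e + 1)}\<close>, and \<open>\<rho>\<close>, \<open>\<delta>\<close>, \<open>\<beta>\<close> act
  on \<open>(m, e)\<close> as \<open>(m + 1, e + 1)\<close>, \<open>(- m, e)\<close>, \<open>(m, e + 1)\<close>.\<close>

definition U :: "int \<Rightarrow> int \<Rightarrow> dvert" where
  "U m e = Uv (m mod n) ((m + e) mod 2)"

definition V :: "int \<Rightarrow> int \<Rightarrow> dvert" where
  "V m e = Vv (m mod n) ((m + e) mod 2)"

lemma coord_eq_iff:
  "(m mod n = m' mod n \<and> (m + e) mod 2 = (m' + e') mod 2) \<longleftrightarrow> n dvd m - m' \<and> even (e - e')"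
proof -
  have "n dvd m - m' \<Longrightarrow> even (m - m')" using n_even by (meson dvd_trans)
  then show ?thesis by (auto simp: mod_eq_dvd_iff)
qed

lemma U_eq_iff: "U m e = U m' e' \<longleftrightarrow> n dvd m - m' \<and> even (e - e')"
  unfolding U_def dvert.inject by (rule coord_eq_iff)

lemma V_eq_iff: "V m e = V m' e' \<longleftrightarrow> n dvd m - m' \<and> even (e - e')"
  unfolding V_def dvert.inject by (rule coord_eq_iff)

lemma U_neq_V [simp]: "U m e \<noteq> V m' e'" "V m' e' \<noteq> U m e"
  by (auto simp: U_def V_def)

lemma U_in_verts [simp]: "U m e \<in> dgp_verts n"
  using n_pos by (auto simp: U_def dgp_verts_def)

lemma V_in_verts [simp]: "V m e \<in> dgp_verts n"
  using n_pos by (auto simp: V_def dgp_verts_def)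

lemma Uv_eq_U: "0 \<le> i \<Longrightarrow> i < n \<Longrightarrow> j \<in> {0, 1} \<Longrightarrow> Uv i j = U i (j - i)"
  by (auto simp: U_def)

lemma Vv_eq_V: "0 \<le> i \<Longrightarrow> i < n \<Longrightarrow> j \<in> {0, 1} \<Longrightarrow> Vv i j = V i (j - i)"
  by (auto simp: V_def)

lemma verts_cases:
  assumes "x \<in> dgp_verts n"
  obtains m e where "x = U m e" | m e where "x = V m e"
  using assms Uv_eq_U Vv_eq_V unfolding dgp_verts_def by blast

lemma U_parity_cases: "U m e = U m 0 \<or> U m e = U m 1"
  by (simp add: U_eq_iff)

lemma V_parity_cases: "V m e = V m 0 \<or> V m e = V m 1"
  by (simp add: V_eq_iff)

lemma finite_dgp_verts: "finite (dgp_verts n)"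
proof -
  have "dgp_verts n \<subseteq> (\<lambda>(i, j). Uv i j) ` ({0..<n} \<times> {0..1}) \<union> (\<lambda>(i, j). Vv i j) ` ({0..<n} \<times> {0..1})"
    unfolding dgp_verts_def by force
  then show ?thesis by (rule finite_subset) auto
qed

lemma outer_edges_eq: "dgp_outer n = {{U m e, U (m + 1) e} | m e. True}"
proof (intro equalityI subsetI)
  fix x assume "x \<in> dgp_outer n"
  then obtain i j where x: "x = {Uv i j, Uv ((i + 1) mod n) (1 - j)}" "0 \<le> i" "i < n" "j \<in> {0, 1}"
    unfolding dgp_outer_def by blast
  then have "x = {U i (j - i), U (i + 1) (j - i)}"
    using Uv_eq_U by (auto simp: U_def)
  then show "x \<in> {{U m e, U (m + 1) e} | m e. True}" by blast
next
  fix x assume "x \<in> {{U m e, U (m + 1) e} | m e. True}"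
  then obtain m e where x: "x = {U m e, U (m + 1) e}" by blast
  have other_end: "U (m + 1) e = Uv ((m mod n + 1) mod n) (1 - (m + e) mod 2)"
    unfolding U_def dvert.inject mod_add_left_eq by presburger
  show "x \<in> dgp_outer n"
    unfolding dgp_outer_def x
    by (rule CollectI, rule exI[of _ "m mod n"], rule exI[of _ "(m + e) mod 2"])
      (use n_pos other_end in \<open>auto simp: U_def[of m e]\<close>)
qed

lemma spokes_eq: "dgp_spokes n = {{U m e, V m (e + 1)} | m e. True}"
proof (intro equalityI subsetI)
  fix x assume "x \<in> dgp_spokes n"
  then obtain i j where x: "x = {Uv i j, Vv i (1 - j)}" "0 \<le> i" "i < n" "j \<in> {0, 1}"
    unfolding dgp_spokes_def by blast
  then have "x = {U i (j - i), V i (j - i + 1)}"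
    using Uv_eq_U by (auto simp: V_def)
  then show "x \<in> {{U m e, V m (e + 1)} | m e. True}" by blast
next
  fix x assume "x \<in> {{U m e, V m (e + 1)} | m e. True}"
  then obtain m e where x: "x = {U m e, V m (e + 1)}" by blast
  have other_end: "V m (e + 1) = Vv (m mod n) (1 - (m + e) mod 2)"
    unfolding V_def dvert.inject by presburger
  show "x \<in> dgp_spokes n"
    unfolding dgp_spokes_def x
    by (rule CollectI, rule exI[of _ "m mod n"], rule exI[of _ "(m + e) mod 2"])
      (use n_pos other_end in \<open>auto simp: U_def[of m e]\<close>)
qed

lemma inner_edges_eq: "dgp_inner n k = {{V m e, V (m + k) (e + 1)} | m e. True}"
proof (intro equalityI subsetI)
  fix x assume "x \<in> dgp_inner n k"
  then obtain i j where x: "x = {Vv i j, Vv ((i + k) mod n) (1 - j)}" "0 \<le> i" "i < n" "j \<in> {0, 1}"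
    unfolding dgp_inner_def by blast
  then have "x = {V i (j - i), V (i + k) (j - i + 1)}"
    using Vv_eq_V k_even by (auto simp: V_def)
  then show "x \<in> {{V m e, V (m + k) (e + 1)} | m e. True}" by blast
next
  fix x assume "x \<in> {{V m e, V (m + k) (e + 1)} | m e. True}"
  then obtain m e where x: "x = {V m e, V (m + k) (e + 1)}" by blast
  have other_end: "V (m + k) (e + 1) = Vv ((m mod n + k) mod n) (1 - (m + e) mod 2)"
    unfolding V_def dvert.inject mod_add_left_eq using k_even by presburger
  show "x \<in> dgp_inner n k"
    unfolding dgp_inner_def x
    by (rule CollectI, rule exI[of _ "m mod n"], rule exI[of _ "(m + e) mod 2"])
      (use n_pos other_end in \<open>auto simp: V_def[of m e]\<close>)
qed

lemma U_eq_shift: "U m e = U m' e' \<Longrightarrow> U (m + a) (e + b) = U (m' + a) (e' + b)"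
  by (simp add: U_eq_iff)

lemma V_eq_shift: "V m e = V m' e' \<Longrightarrow> V (m + a) (e + b) = V (m' + a) (e' + b)"
  by (simp add: V_eq_iff)

lemma outer_edge_U_iff: "{U m e, y} \<in> dgp_outer n \<longleftrightarrow> y = U (m + 1) e \<or> y = U (m - 1) e"
proof
  assume "{U m e, y} \<in> dgp_outer n"
  then obtain a b where "U m e = U a b \<and> y = U (a + 1) b \<or> U m e = U (a + 1) b \<and> y = U a b"
    unfolding outer_edges_eq by (auto simp: doubleton_eq_iff)
  then show "y = U (m + 1) e \<or> y = U (m - 1) e"
  proof (elim disjE conjE)
    assume "U m e = U a b" "y = U (a + 1) b"
    then show ?thesis using U_eq_shift[of m e a b 1 0] by simp
  next
    assume "U m e = U (a + 1) b" "y = U a b"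
    then show ?thesis using U_eq_shift[of m e "a + 1" b "-1" 0] by simp
  qed
next
  assume "y = U (m + 1) e \<or> y = U (m - 1) e"
  moreover have "{U m e, U (m - 1) e} = {U (m - 1) e, U (m - 1 + 1) e}" by auto
  ultimately show "{U m e, y} \<in> dgp_outer n"
    unfolding outer_edges_eq by blast
qed

lemma spoke_U_iff: "{U m e, y} \<in> dgp_spokes n \<longleftrightarrow> y = V m (e + 1)"
proof
  assume "{U m e, y} \<in> dgp_spokes n"
  then obtain a b where "U m e = U a b" "y = V a (b + 1)"
    unfolding spokes_eq by (auto simp: doubleton_eq_iff)
  then show "y = V m (e + 1)" by (simp add: U_eq_iff V_eq_iff dvd_diff_commute)
qed (auto simp: spokes_eq)

lemma spoke_V_iff: "{V m e, y} \<in> dgp_spokes n \<longleftrightarrow> y = U m (e + 1)"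
proof
  assume "{V m e, y} \<in> dgp_spokes n"
  then obtain a b where "V m e = V a (b + 1)" "y = U a b"
    unfolding spokes_eq by (auto simp: doubleton_eq_iff)
  then show "y = U m (e + 1)" by (simp add: U_eq_iff V_eq_iff dvd_diff_commute)
next
  assume "y = U m (e + 1)"
  moreover have "V m e = V m (e + 1 + 1)" by (simp add: V_eq_iff)
  ultimately have "{V m e, y} = {U m (e + 1), V m (e + 1 + 1)}" by auto
  then show "{V m e, y} \<in> dgp_spokes n"
    unfolding spokes_eq by blast
qed

lemma inner_edge_V_iff:
  "{V m e, y} \<in> dgp_inner n k \<longleftrightarrow> y = V (m + k) (e + 1) \<or> y = V (m - k) (e + 1)"
proof
  assume "{V m e, y} \<in> dgp_inner n k"
  then obtain a b where "V m e = V a b \<and> y = V (a + k) (b + 1) \<or> V m e = V (a + k) (b + 1) \<and> y = V a b"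
    unfolding inner_edges_eq by (auto simp: doubleton_eq_iff)
  then show "y = V (m + k) (e + 1) \<or> y = V (m - k) (e + 1)"
  proof (elim disjE conjE)
    assume "V m e = V a b" "y = V (a + k) (b + 1)"
    then show ?thesis using V_eq_shift[of m e a b k 1] by simp
  next
    assume "V m e = V (a + k) (b + 1)" "y = V a b"
    moreover have "V (m - k) (e + 1) = V a (b + 1 + 1)"
      using V_eq_shift[of m e "a + k" "b + 1" "-k" 1] \<open>V m e = V (a + k) (b + 1)\<close> by simp
    moreover have "V a (b + 1 + 1) = V a b" by (simp add: V_eq_iff)
    ultimately show ?thesis by metis
  qed
next
  assume "y = V (m + k) (e + 1) \<or> y = V (m - k) (e + 1)"
  moreover have "{V m e, V (m - k) (e + 1)} = {V (m - k) (e + 1), V (m - k + k) (e + 1 + 1)}"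
    by (auto simp: V_eq_iff)
  ultimately show "{V m e, y} \<in> dgp_inner n k"
    unfolding inner_edges_eq by blast
qed

definition outer_vertex :: "dvert \<Rightarrow> bool" where
  "outer_vertex x = (case x of Uv _ _ \<Rightarrow> True | Vv _ _ \<Rightarrow> False)"

lemma outer_vertex_U [simp]: "outer_vertex (U m e)"
  and outer_vertex_V [simp]: "\<not> outer_vertex (V m e)"
  by (simp_all add: outer_vertex_def U_def V_def)

lemma outer_edge_vertices: "{x, y} \<in> dgp_outer n \<Longrightarrow> outer_vertex x \<and> outer_vertex y"
  unfolding outer_edges_eq by (auto simp: doubleton_eq_iff)

lemma inner_edge_vertices: "{x, y} \<in> dgp_inner n k \<Longrightarrow> \<not> outer_vertex x \<and> \<not> outer_vertex y"
  unfolding inner_edges_eq by (auto simp: doubleton_eq_iff)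

lemma spoke_vertices: "{x, y} \<in> dgp_spokes n \<Longrightarrow> outer_vertex x \<noteq> outer_vertex y"
  unfolding spokes_eq by (auto simp: doubleton_eq_iff)

lemma dgp_edge_kind:
  assumes "{x, y} \<in> dgp_edges n k"
  shows "{x, y} \<in> dgp_outer n \<longleftrightarrow> outer_vertex x \<and> outer_vertex y"
    and "{x, y} \<in> dgp_inner n k \<longleftrightarrow> \<not> outer_vertex x \<and> \<not> outer_vertex y"
    and "{x, y} \<in> dgp_spokes n \<longleftrightarrow> outer_vertex x \<noteq> outer_vertex y"
  using assms outer_edge_vertices inner_edge_vertices spoke_vertices
  unfolding dgp_edges_def by blast+

lemma outer_pairs: "dgp_outer n \<subseteq> pairs_in (dgp_verts n)"
  unfolding outer_edges_eq pairs_in_def using U_in_verts by blast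

lemma spokes_pairs: "dgp_spokes n \<subseteq> pairs_in (dgp_verts n)"
  unfolding spokes_eq pairs_in_def using U_in_verts V_in_verts by blast

lemma inner_pairs: "dgp_inner n k \<subseteq> pairs_in (dgp_verts n)"
  unfolding inner_edges_eq pairs_in_def using V_in_verts by blast

lemma edges_pairs: "dgp_edges n k \<subseteq> pairs_in (dgp_verts n)"
  using outer_pairs spokes_pairs inner_pairs unfolding dgp_edges_def by blast

section \<open>The groups A(n,k), B(n,k) and C(n,k)\<close>

abbreviation stab :: "dvert set set \<Rightarrow> (dvert \<Rightarrow> dvert) set" where
  "stab E \<equiv> edge_stabilizer (dgp_verts n) E"

lemma autA_eq: "autA n k = stab (dgp_edges n k)"
  by (simp add: autA_def edge_stabilizer_def)

lemma autB_eq: "autB n k = stab (dgp_edges n k) \<inter> stab (dgp_spokes n)"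
proof -
  have "f \<in> autB n k \<longleftrightarrow> f \<in> stab (dgp_edges n k) \<and> f \<in> stab (dgp_spokes n)" for f
  proof (cases "f \<in> Bij (dgp_verts n)")
    case True
    then show ?thesis
      using edge_image_eq_iff[OF True spokes_pairs]
      unfolding autB_def autA_eq edge_stabilizer_def by simp
  qed (simp add: autB_def autA_eq edge_stabilizer_def)
  then show ?thesis by blast
qed

lemma autC_eq:
  "autC n k = stab (dgp_edges n k) \<inter> stab (dgp_outer n) \<inter> stab (dgp_inner n k) \<inter> stab (dgp_spokes n)"
proof -
  have "f \<in> autC n k \<longleftrightarrow> f \<in> stab (dgp_edges n k) \<and> f \<in> stab (dgp_outer n)
          \<and> f \<in> stab (dgp_inner n k) \<and> f \<in> stab (dgp_spokes n)" for f
  proof (cases "f \<in> Bij (dgp_verts n)")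
    case True
    then show ?thesis
      using edge_image_eq_iff[OF True outer_pairs] edge_image_eq_iff[OF True inner_pairs]
        edge_image_eq_iff[OF True spokes_pairs]
      unfolding autC_def autA_eq edge_stabilizer_def by simp
  qed (simp add: autC_def autA_eq edge_stabilizer_def)
  then show ?thesis by blast
qed

lemma subgroup_autB: "subgroup (autB n k) (dgp_sym n)"
  unfolding autB_eq by (intro subgroup_Int subgroup_edge_stabilizer)

lemma subgroup_autC: "subgroup (autC n k) (dgp_sym n)"
  unfolding autC_eq by (intro subgroup_Int subgroup_edge_stabilizer)

lemma autC_subset_autB: "autC n k \<subseteq> autB n k"
  unfolding autC_eq autB_eq by blast

lemma maps_dgp_edges:
  assumes outer: "\<And>m e. {F (U m e), F (U (m + 1) e)} \<in> Eo"
    and spoke: "\<And>m e. {F (U m e), F (V m (e + 1))} \<in> dgp_spokes n"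
    and inner: "\<And>m e. {F (V m e), F (V (m + k) (e + 1))} \<in> Ei"
  shows "{x, y} \<in> dgp_outer n \<Longrightarrow> {F x, F y} \<in> Eo"
    and "{x, y} \<in> dgp_spokes n \<Longrightarrow> {F x, F y} \<in> dgp_spokes n"
    and "{x, y} \<in> dgp_inner n k \<Longrightarrow> {F x, F y} \<in> Ei"
    and "x \<in> dgp_verts n \<Longrightarrow> F x \<in> dgp_verts n"
proof -
  have image: "{F x, F y} = {F a, F b}" if "{x, y} = {a, b}" for a b
    using that by (auto simp: doubleton_eq_iff)
  show "{F x, F y} \<in> Eo" if xy: "{x, y} \<in> dgp_outer n"
  proof -
    obtain m e where "{x, y} = {U m e, U (m + 1) e}" using xy unfolding outer_edges_eq by blast
    from image[OF this] outer[of m e] show ?thesis by simp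
  qed
  show "{F x, F y} \<in> dgp_spokes n" if xy: "{x, y} \<in> dgp_spokes n"
  proof -
    obtain m e where "{x, y} = {U m e, V m (e + 1)}" using xy unfolding spokes_eq by blast
    from image[OF this] spoke[of m e] show ?thesis by simp
  qed
  show "{F x, F y} \<in> Ei" if xy: "{x, y} \<in> dgp_inner n k"
  proof -
    obtain m e where "{x, y} = {V m e, V (m + k) (e + 1)}" using xy unfolding inner_edges_eq by blast
    from image[OF this] inner[of m e] show ?thesis by simp
  qed
  have U_end: "F (U m e) \<in> dgp_verts n" for m e
    using pairs_in_memD[OF subsetD[OF spokes_pairs spoke[of m e]]] by blast
  have V_end: "F (V m e) \<in> dgp_verts n" for m e
    using pairs_in_memD[OF subsetD[OF spokes_pairs spoke[of m "e - 1"]]] by simp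
  show "x \<in> dgp_verts n \<Longrightarrow> F x \<in> dgp_verts n"
    by (elim verts_cases) (simp_all add: U_end V_end)
qed

lemma autB_memI:
  assumes ext: "F \<in> extensional (dgp_verts n)" and inj: "inj_on F (dgp_verts n)"
    and outer: "\<And>m e. {F (U m e), F (U (m + 1) e)} \<in> Eo"
    and spoke: "\<And>m e. {F (U m e), F (V m (e + 1))} \<in> dgp_spokes n"
    and inner: "\<And>m e. {F (V m e), F (V (m + k) (e + 1))} \<in> Ei"
    and Eo: "Eo \<subseteq> dgp_edges n k" and Ei: "Ei \<subseteq> dgp_edges n k"
  shows "F \<in> autB n k"
proof -
  note maps = maps_dgp_edges[where F = F, OF outer spoke inner]
  have into: "F ` dgp_verts n \<subseteq> dgp_verts n" using maps(4) by blast
  have "F \<in> stab (dgp_edges n k)"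
  proof (rule edge_stabilizerI_finite[OF finite_dgp_verts ext into inj edges_pairs])
    fix x y assume "{x, y} \<in> dgp_edges n k"
    then show "{F x, F y} \<in> dgp_edges n k"
      using maps(1-3) Eo Ei unfolding dgp_edges_def by blast
  qed
  moreover have "F \<in> stab (dgp_spokes n)"
    using maps(2) by (intro edge_stabilizerI_finite[OF finite_dgp_verts ext into inj spokes_pairs])
  ultimately show ?thesis unfolding autB_eq by blast
qed

lemma autC_memI:
  assumes ext: "F \<in> extensional (dgp_verts n)" and inj: "inj_on F (dgp_verts n)"
    and outer: "\<And>m e. {F (U m e), F (U (m + 1) e)} \<in> dgp_outer n"
    and spoke: "\<And>m e. {F (U m e), F (V m (e + 1))} \<in> dgp_spokes n"
    and inner: "\<And>m e. {F (V m e), F (V (m + k) (e + 1))} \<in> dgp_inner n k"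
  shows "F \<in> autC n k"
proof -
  note maps = maps_dgp_edges[where F = F, OF outer spoke inner]
  have into: "F ` dgp_verts n \<subseteq> dgp_verts n" using maps(4) by blast
  note stabI = edge_stabilizerI_finite[OF finite_dgp_verts ext into inj]
  have "F \<in> autB n k"
    by (rule autB_memI[OF ext inj outer spoke inner]) (auto simp: dgp_edges_def)
  moreover have "F \<in> stab (dgp_outer n)"
    using maps(1) by (rule stabI[OF outer_pairs])
  moreover have "F \<in> stab (dgp_inner n k)"
    using maps(3) by (rule stabI[OF inner_pairs])
  ultimately show ?thesis unfolding autC_eq autB_eq by blast
qed

lemma inj_on_dgp_vertsI:
  assumes "\<And>m e m' e'. F (U m e) = F (U m' e') \<Longrightarrow> U m e = U m' e'"
    and "\<And>m e m' e'. F (V m e) = F (V m' e') \<Longrightarrow> V m e = V m' e'"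
    and "\<And>m e m' e'. F (U m e) \<noteq> F (V m' e')"
  shows "inj_on F (dgp_verts n)"
proof (rule inj_onI)
  fix x y assume "x \<in> dgp_verts n" "y \<in> dgp_verts n" "F x = F y"
  then show "x = y"
    by (elim verts_cases) (auto dest: assms(1,2) simp: assms(3) assms(3)[THEN not_sym])
qed

lemma mod_2_eqI: "even (a - b) \<Longrightarrow> (a :: int) mod 2 = b mod 2"
  by (simp add: mod_eq_dvd_iff)

lemma rho_U: "rho n (U m e) = U (m + 1) (e + 1)"
  and rho_V: "rho n (V m e) = V (m + 1) (e + 1)"
  unfolding rho_def restrict_apply'[OF U_in_verts] restrict_apply'[OF V_in_verts]
  by (simp_all add: U_def V_def mod_add_left_eq mod_2_eqI)

lemma delta_U: "delta n (U m e) = U (- m) e"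
  and delta_V: "delta n (V m e) = V (- m) e"
  unfolding delta_def restrict_apply'[OF U_in_verts] restrict_apply'[OF V_in_verts]
  by (simp_all add: U_def V_def mod_minus_eq mod_2_eqI)

lemma beta_U: "beta n (U m e) = U m (e + 1)"
  and beta_V: "beta n (V m e) = V m (e + 1)"
  unfolding beta_def restrict_apply'[OF U_in_verts] restrict_apply'[OF V_in_verts]
  by (simp_all add: U_def V_def) presburger+

lemma rho_in_autC: "rho n \<in> autC n k"
proof (rule autC_memI)
  show "rho n \<in> extensional (dgp_verts n)" by (simp add: rho_def)
  show "inj_on (rho n) (dgp_verts n)"
    by (rule inj_on_dgp_vertsI) (auto simp: rho_U rho_V U_eq_iff V_eq_iff)
qed (simp_all add: rho_U rho_V outer_edge_U_iff spoke_U_iff inner_edge_V_iff algebra_simps)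

lemma delta_in_autC: "delta n \<in> autC n k"
proof (rule autC_memI)
  show "delta n \<in> extensional (dgp_verts n)" by (simp add: delta_def)
  show "inj_on (delta n) (dgp_verts n)"
    by (rule inj_on_dgp_vertsI) (auto simp: delta_U delta_V U_eq_iff V_eq_iff dvd_diff_commute)
qed (simp_all add: delta_U delta_V outer_edge_U_iff spoke_U_iff inner_edge_V_iff
      U_eq_iff V_eq_iff algebra_simps)

lemma beta_in_autC: "beta n \<in> autC n k"
proof (rule autC_memI)
  show "beta n \<in> extensional (dgp_verts n)" by (simp add: beta_def)
  show "inj_on (beta n) (dgp_verts n)"
    by (rule inj_on_dgp_vertsI) (auto simp: beta_U beta_V U_eq_iff V_eq_iff)
qed (simp_all add: beta_U beta_V outer_edge_U_iff spoke_U_iff inner_edge_V_iff)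

section \<open>The automorphisms \<lambda> and \<tau>\<close>

definition Lam :: "int \<Rightarrow> dvert \<Rightarrow> dvert" where
  "Lam s = restrict (\<lambda>x. case x of
       Uv i j \<Rightarrow> (if odd (i + j) then Vv ((s + (i - k) * k) mod n) j else Vv ((i * k) mod n) j)
     | Vv i j \<Rightarrow> (if odd (i + j) then Uv ((i * k) mod n) j else Uv ((s + (i - k) * k) mod n) j))
     (dgp_verts n)"

lemma lam_eq_Lam: "lam n k = Lam 1"
  by (simp add: lam_def Lam_def)

lemma tau_eq_Lam: "tau n k = Lam (-1)"
  by (simp add: tau_def Lam_def)

lemma even_mod_n_iff: "even (m mod n) \<longleftrightarrow> even m"
proof -
  have "(m mod n) mod 2 = m mod 2" using n_even by (simp add: mod_mod_cancel)
  then show ?thesis by (simp add: even_iff_mod_2_eq_zero)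
qed

lemma int_mod_2_cases: "(e :: int) mod 2 \<in> {0, 1}"
  unfolding insert_iff empty_iff by presburger

lemma mod_n_mult_add: "(m mod n * k + c) mod n = (m * k + c) mod n"
  by (metis mod_add_left_eq mod_mult_left_eq)

lemma Lam_U:
  assumes "odd s"
  shows "Lam s (U m e) = V (m * k + e mod 2 * (s - k^2)) m"
proof -
  have idx: "s + (m mod n - k) * k = m mod n * k + (s - k^2)"
    by (simp add: algebra_simps power2_eq_square)
  have "Lam s (U m e) = (if odd e then Vv ((m mod n * k + (s - k^2)) mod n) ((m + e) mod 2)
                          else Vv ((m mod n * k) mod n) ((m + e) mod 2))"
    unfolding Lam_def restrict_apply'[OF U_in_verts] by (simp add: U_def even_mod_n_iff idx)
  then show ?thesis
    using assms k_even
    by (auto simp: V_def mod_n_mult_add mod_mult_left_eq odd_iff_mod_2_eq_one intro!: mod_2_eqI)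
qed

lemma Lam_V:
  assumes "odd s"
  shows "Lam s (V m e) = U (m * k + (e + 1) mod 2 * (s - k^2)) (m + 1)"
proof -
  have idx: "s + (m mod n - k) * k = m mod n * k + (s - k^2)"
    by (simp add: algebra_simps power2_eq_square)
  have "Lam s (V m e) = (if odd e then Uv ((m mod n * k) mod n) ((m + e) mod 2)
                          else Uv ((m mod n * k + (s - k^2)) mod n) ((m + e) mod 2))"
    unfolding Lam_def restrict_apply'[OF V_in_verts] by (simp add: V_def even_mod_n_iff idx)
  then show ?thesis
    using assms k_even
    by (auto simp: U_def mod_n_mult_add mod_mult_left_eq odd_iff_mod_2_eq_one intro!: mod_2_eqI)
qed

lemma odd_half_if_cong:
  assumes "s \<in> {1, -1}" and "n div 2 dvd k^2 - s"
  shows "odd (n div 2)"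
proof
  assume "even (n div 2)"
  then have "even (k^2 - s)" using assms(2) by (rule dvd_trans)
  then show False using assms(1) k_even by auto
qed

lemma dvd_double_of_cong: "n div 2 dvd k^2 - s \<Longrightarrow> n dvd 2 * (k^2 - s)"
  using n_eq_double_half by (metis mult_dvd_mono dvd_refl)

text \<open>Under the congruence, \<open>k\<close> is invertible modulo the odd number \<open>n / 2\<close>.\<close>

lemma dvd_of_dvd_mult_k:
  assumes s: "s \<in> {1, -1}" and cong: "n div 2 dvd k^2 - s" and dk: "n dvd d * k" and d: "even d"
  shows "n dvd d"
proof -
  have "n div 2 dvd d * k * k - d * (k^2 - s)"
    using dvd_trans[OF _ dk, of "n div 2"] cong n_eq_double_half
    by (metis dvd_diff dvd_mult dvd_mult2 dvd_triv_right)
  moreover have "d * k * k - d * (k^2 - s) = d * s"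
    by (simp add: power2_eq_square algebra_simps)
  ultimately have "n div 2 dvd d" using s by auto
  moreover have "coprime 2 (n div 2)" using odd_half_if_cong[OF s cong] by simp
  ultimately have "2 * (n div 2) dvd d" using d by (simp add: divides_mult)
  then show ?thesis using n_eq_double_half by simp
qed

lemma Lam_index_inj:
  assumes s: "s \<in> {1, -1}" and cong: "n div 2 dvd k^2 - s"
    and dvd: "n dvd (m - m') * k + (a - a') * (s - k^2)" and par: "even (m - m')"
    and a: "a \<in> {0, 1}" "a' \<in> {0, 1}"
  shows "n dvd m - m' \<and> a = a'"
proof -
  have "even ((m - m') * k + (a - a') * (s - k^2))"
    using dvd_trans[OF n_even dvd] .
  then have "a = a'" using a s k_even by auto
  then show ?thesis
    using dvd_of_dvd_mult_k[OF s cong _ par] dvd by simp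
qed

lemma Lam_inj:
  assumes s: "s \<in> {1, -1}" and cong: "n div 2 dvd k^2 - s"
  shows "inj_on (Lam s) (dgp_verts n)"
proof (rule inj_on_dgp_vertsI)
  have so: "odd s" using s by auto
  let ?c = "s - k^2"
  have diff: "m * k + a * ?c - (m' * k + a' * ?c) = (m - m') * k + (a - a') * ?c" for m m' a a'
    by (simp add: algebra_simps)
  note index_inj = Lam_index_inj[OF s cong _ _ int_mod_2_cases int_mod_2_cases]
  fix m e m' e'
  show "U m e = U m' e'" if "Lam s (U m e) = Lam s (U m' e')"
  proof -
    have "n dvd (m - m') * k + (e mod 2 - e' mod 2) * ?c" "even (m - m')"
      using that by (simp_all add: Lam_U[OF so] V_eq_iff diff)
    from index_inj[OF this] show ?thesis by (simp add: U_eq_iff mod_eq_dvd_iff)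
  qed
  show "V m e = V m' e'" if "Lam s (V m e) = Lam s (V m' e')"
  proof -
    have "n dvd (m - m') * k + ((e + 1) mod 2 - (e' + 1) mod 2) * ?c" "even (m - m')"
      using that by (simp_all add: Lam_V[OF so] U_eq_iff diff)
    from index_inj[OF this] show ?thesis by (simp add: V_eq_iff mod_eq_dvd_iff)
  qed
  show "Lam s (U m e) \<noteq> Lam s (V m' e')"
    by (simp add: Lam_U[OF so] Lam_V[OF so])
qed

lemma Lam_in_autB:
  assumes s: "s \<in> {1, -1}" and cong: "n div 2 dvd k^2 - s"
  shows "Lam s \<in> autB n k"
proof (rule autB_memI[where Eo = "dgp_inner n k" and Ei = "dgp_outer n"])
  have so: "odd s" using s by auto
  let ?c = "s - k^2"
  show "Lam s \<in> extensional (dgp_verts n)" by (simp add: Lam_def)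
  show "inj_on (Lam s) (dgp_verts n)" using Lam_inj[OF s cong] .
  fix m e
  have "V ((m + 1) * k + e mod 2 * ?c) (m + 1) = V (m * k + e mod 2 * ?c + k) (m + 1)"
    by (simp add: algebra_simps)
  then show "{Lam s (U m e), Lam s (U (m + 1) e)} \<in> dgp_inner n k"
    by (simp add: Lam_U[OF so] inner_edge_V_iff)
  show "{Lam s (U m e), Lam s (V m (e + 1))} \<in> dgp_spokes n"
    by (simp add: Lam_U[OF so] Lam_V[OF so] spoke_V_iff)
  let ?x = "m * k + (e + 1) mod 2 * ?c"
  have "n dvd (m + k) * k + (e + 1 + 1) mod 2 * ?c - (?x + s)"
  proof (cases "even e")
    case True
    then have "e mod 2 = 0" "(e + 1) mod 2 = 1" by presburger+
    then have "(m + k) * k + (e + 1 + 1) mod 2 * ?c - (?x + s) = 2 * (k^2 - s)"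
      by (simp add: power2_eq_square algebra_simps)
    then show ?thesis using dvd_double_of_cong[OF cong] by metis
  next
    case False
    then have "e mod 2 = 1" "(e + 1) mod 2 = 0" by presburger+
    then show ?thesis by (simp add: power2_eq_square algebra_simps)
  qed
  then have "Lam s (V (m + k) (e + 1)) = U (?x + s) (m + 1)"
    using k_even by (simp add: Lam_V[OF so] U_eq_iff)
  then show "{Lam s (V m e), Lam s (V (m + k) (e + 1))} \<in> dgp_outer n"
    using s by (auto simp: Lam_V[OF so] outer_edge_U_iff)
qed (auto simp: dgp_edges_def)

lemma autC_outer_vertex: "f \<in> autC n k \<Longrightarrow> outer_vertex (f (U m e))"
  using edge_stabilizer_edge[OF _ outer_pairs, of f "U m e" "U (m + 1) e"]
    outer_edge_vertices outer_edge_U_iff unfolding autC_eq by blast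

lemma Lam_notin_autC: "s \<in> {1, -1} \<Longrightarrow> Lam s \<notin> autC n k"
  using autC_outer_vertex[of "Lam s" 0 0] Lam_U[of s 0 0] by auto

section \<open>Side-swapping automorphisms\<close>

lemma edge_invariant_const:
  assumes Q: "\<And>x y. {x, y} \<in> dgp_edges n k \<Longrightarrow> Q x = Q y" and x: "x \<in> dgp_verts n"
  shows "Q x = Q (U 0 0)"
proof -
  have edge: "{x, y} \<in> dgp_edges n k" if "{x, y} \<in> dgp_outer n \<or> {x, y} \<in> dgp_spokes n \<or> {x, y} \<in> dgp_inner n k" for x y
    using that unfolding dgp_edges_def by blast
  have along_outer: "Q (U m e) = Q (U 0 e)" for m e
  proof (induction m rule: int_induct[where k = 0])
    case (step1 i)
    then show ?case using Q[OF edge, of "U i e" "U (i + 1) e"] by (simp add: outer_edge_U_iff)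
  next
    case (step2 i)
    then show ?case using Q[OF edge, of "U i e" "U (i - 1) e"] by (simp add: outer_edge_U_iff)
  qed simp
  have V_to_U: "Q (V m e) = Q (U m (e + 1))" for m e
    using Q[OF edge, of "U m (e + 1)" "V m e"] spoke_U_iff[of m "e + 1" "V m e"]
    by (simp add: V_eq_iff)
  have "Q (U 0 1) = Q (U k 1)" using along_outer[of k 1] by simp
  also have "\<dots> = Q (V k 0)" using V_to_U[of k 0] by simp
  also have "\<dots> = Q (V 0 1)"
    using Q[OF edge, of "V 0 1" "V k 0"] inner_edge_V_iff[of 0 1 "V k 0"] by (simp add: V_eq_iff)
  also have "\<dots> = Q (U 0 0)" using V_to_U[of 0 1] U_eq_iff[of 0 2 0 0] by simp
  finally have "Q (U m e) = Q (U 0 0)" for m e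
    using along_outer U_parity_cases[of 0 e] by metis
  then show ?thesis using x V_to_U by (elim verts_cases) simp_all
qed

lemma autB_preserves_or_swaps_sides:
  assumes f: "f \<in> autB n k"
  shows "(\<forall>x\<in>dgp_verts n. outer_vertex (f x) = outer_vertex x)
       \<or> (\<forall>x\<in>dgp_verts n. outer_vertex (f x) \<noteq> outer_vertex x)"
proof -
  have fE: "f \<in> stab (dgp_edges n k)" and fS: "f \<in> stab (dgp_spokes n)"
    using f by (auto simp: autB_eq)
  have "(outer_vertex (f x) = outer_vertex x) = (outer_vertex (f y) = outer_vertex y)"
    if e: "{x, y} \<in> dgp_edges n k" for x y
  proof -
    have xy: "x \<in> dgp_verts n \<and> y \<in> dgp_verts n"
      using pairs_in_memD[OF subsetD[OF edges_pairs e]] .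
    have fe: "{f x, f y} \<in> dgp_edges n k"
      using edge_stabilizer_edge[OF fE edges_pairs e] .
    have "{f x, f y} \<in> dgp_spokes n \<longleftrightarrow> {x, y} \<in> dgp_spokes n"
      using edge_stabilizer_edge[OF fS spokes_pairs, of x y] edge_stabilizer_edge_rev[OF fS, of x y] xy
      by blast
    then have "(outer_vertex (f x) \<noteq> outer_vertex (f y)) = (outer_vertex x \<noteq> outer_vertex y)"
      unfolding dgp_edge_kind(3)[OF e] dgp_edge_kind(3)[OF fe] .
    then show ?thesis by auto
  qed
  then have "outer_vertex (f x) = outer_vertex x
      \<longleftrightarrow> outer_vertex (f (U 0 0)) = outer_vertex (U 0 0)" if "x \<in> dgp_verts n" for x
    by (rule edge_invariant_const[OF _ that])
  then show ?thesis
    by (cases "outer_vertex (f (U 0 0)) = outer_vertex (U 0 0)") simp_all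
qed

lemma side_preserving_autB_in_autC:
  assumes f: "f \<in> autB n k" and pres: "\<forall>x\<in>dgp_verts n. outer_vertex (f x) = outer_vertex x"
  shows "f \<in> autC n k"
proof -
  have fE: "f \<in> stab (dgp_edges n k)" and fS: "f \<in> stab (dgp_spokes n)"
    using f by (auto simp: autB_eq)
  have fB: "f \<in> Bij (dgp_verts n)" using fE by (simp add: edge_stabilizer_def)
  have edge_iff: "{x, y} \<in> dgp_edges n k \<longleftrightarrow> {f x, f y} \<in> dgp_edges n k"
    and sides: "outer_vertex (f x) = outer_vertex x" "outer_vertex (f y) = outer_vertex y"
    if "x \<in> dgp_verts n" "y \<in> dgp_verts n" for x y
    using fE pres that by (simp_all add: edge_stabilizer_def)
  have "f \<in> stab (dgp_outer n)"
    unfolding edge_stabilizer_def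
  proof (intro CollectI conjI fB ballI)
    fix x y assume "x \<in> dgp_verts n" "y \<in> dgp_verts n"
    then show "{x, y} \<in> dgp_outer n \<longleftrightarrow> {f x, f y} \<in> dgp_outer n"
      using edge_iff sides dgp_edge_kind(1) unfolding dgp_edges_def by blast
  qed
  moreover have "f \<in> stab (dgp_inner n k)"
    unfolding edge_stabilizer_def
  proof (intro CollectI conjI fB ballI)
    fix x y assume "x \<in> dgp_verts n" "y \<in> dgp_verts n"
    then show "{x, y} \<in> dgp_inner n k \<longleftrightarrow> {f x, f y} \<in> dgp_inner n k"
      using edge_iff sides dgp_edge_kind(2) unfolding dgp_edges_def by blast
  qed
  ultimately show ?thesis using fE fS unfolding autC_eq by blast
qed

lemma U_two_apart: "U (m + 1) e \<noteq> U (m - 1) e"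
  using n_ge_6 zdvd_imp_le[of n 2] by (auto simp: U_eq_iff)

lemma V_2k_apart: "V (m + k) e \<noteq> V (m - k) e"
  using k_small k_pos zdvd_imp_le[of n "2 * k"] by (auto simp: V_eq_iff)

lemma distinct_outer_neighbours:
  assumes "{U a b, y} \<in> dgp_outer n" "{U a b, z} \<in> dgp_outer n" "y \<noteq> z"
  shows "\<exists>u\<in>{1, -1}. y = U (a + u) b \<and> z = U (a - u) b"
  using assms by (auto simp: outer_edge_U_iff)

lemma autB_maps_verts: "f \<in> autB n k \<Longrightarrow> x \<in> dgp_verts n \<Longrightarrow> f x \<in> dgp_verts n"
  unfolding autB_eq edge_stabilizer_def using Bij_imp_funcset by fast

lemma outer_vertex_eq_U: "x \<in> dgp_verts n \<Longrightarrow> outer_vertex x \<Longrightarrow> \<exists>m e. x = U m e"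
  by (elim verts_cases) auto

lemma inner_vertex_eq_V: "x \<in> dgp_verts n \<Longrightarrow> \<not> outer_vertex x \<Longrightarrow> \<exists>m e. x = V m e"
  by (elim verts_cases) auto

lemma inner_walk_adj:
  assumes r: "r \<in> {k, -k}" and e: "{V (c + x * r) (d + x), y} \<in> dgp_inner n k"
  shows "y = V (c + (x + 1) * r) (d + (x + 1)) \<or> y = V (c + (x - 1) * r) (d + (x - 1))"
  using r e by (auto simp: inner_edge_V_iff V_eq_iff algebra_simps)

lemma side_swapping_walk:
  assumes f: "f \<in> autB n k" and sw: "\<forall>x\<in>dgp_verts n. outer_vertex (f x) \<noteq> outer_vertex x"
  shows "\<exists>r c d. r \<in> {k, -k} \<and> (\<forall>m. f (V m 0) = U (c + m * r) (d + m + 1))"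
proof -
  have fE: "f \<in> stab (dgp_edges n k)" and fS: "f \<in> stab (dgp_spokes n)"
    using f by (auto simp: autB_eq)
  have inj: "inj_on f (dgp_verts n)" using fE by (simp add: edge_stabilizer_def Bij_def bij_betw_def)
  have to_inner: "{f (U m e), f (U (m + 1) e)} \<in> dgp_inner n k" for m e
  proof -
    have "{U m e, U (m + 1) e} \<in> dgp_edges n k" by (simp add: dgp_edges_def outer_edge_U_iff)
    then have "{f (U m e), f (U (m + 1) e)} \<in> dgp_edges n k"
      by (rule edge_stabilizer_edge[OF fE edges_pairs])
    then show ?thesis using dgp_edge_kind(2) sw by simp
  qed
  obtain c d where g0: "f (U 0 1) = V c d"
    using inner_vertex_eq_V[OF autB_maps_verts[OF f U_in_verts]] sw by fastforce
  have "f (U 1 1) = V (c + k) (d + 1) \<or> f (U 1 1) = V (c + - k) (d + 1)"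
    using to_inner[of 0 1] g0 by (simp add: inner_edge_V_iff)
  then obtain r where r: "r \<in> {k, -k}" and g1: "f (U 1 1) = V (c + r) (d + 1)"
    by blast
  have walk: "f (U m 1) = V (c + m * r) (d + m)" for m
  proof (rule nonbacktracking_walk_eq[where R = "dgp_inner n k" and g = "\<lambda>m. f (U m 1)"])
    show "{V (c + x * r) (d + x), y} \<in> dgp_inner n k \<Longrightarrow>
        y = V (c + (x + 1) * r) (d + (x + 1)) \<or> y = V (c + (x - 1) * r) (d + (x - 1))" for x y
      using inner_walk_adj[OF r] .
    show "f (U (m + 1) 1) \<noteq> f (U (m - 1) 1)" for m
      using U_two_apart inj by (simp add: inj_on_eq_iff)
  qed (use to_inner g0 g1 in simp_all)
  have "f (V m 0) = U (c + m * r) (d + m + 1)" for m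
  proof -
    have "{U m 1, V m 0} \<in> dgp_spokes n" by (simp add: spoke_U_iff V_eq_iff)
    then have "{V (c + m * r) (d + m), f (V m 0)} \<in> dgp_spokes n"
      using edge_stabilizer_edge[OF fS spokes_pairs] walk by metis
    then show ?thesis by (simp add: spoke_V_iff add.assoc)
  qed
  with r show ?thesis by blast
qed

lemma cong_of_dvd_double_diff:
  assumes r: "r \<in> {k, -k}" and u: "u \<in> {1, -1}" and dvd: "n dvd 2 * (k * r - u)"
  shows "\<exists>s\<in>{1, -1}. n div 2 dvd k^2 - s"
proof -
  have half: "n div 2 dvd k * r - u" using half_dvd_of_dvd_double[OF dvd] .
  show ?thesis
  proof (cases "r = k")
    case True
    then show ?thesis using half u by (auto simp: power2_eq_square)
  next
    case False
    then have "k^2 - (- u) = - (k * r - u)" using r by (simp add: power2_eq_square)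
    then have "n div 2 dvd k^2 - (- u)" using half dvd_minus_iff by metis
    then show ?thesis using u by auto
  qed
qed

lemma side_swapping_cong:
  assumes f: "f \<in> autB n k" and sw: "\<forall>x\<in>dgp_verts n. outer_vertex (f x) \<noteq> outer_vertex x"
  shows "\<exists>s\<in>{1, -1}. n div 2 dvd k^2 - s"
proof -
  obtain r c d where r: "r \<in> {k, -k}" and fV: "\<And>m. f (V m 0) = U (c + m * r) (d + m + 1)"
    using side_swapping_walk[OF f sw] by blast
  have fE: "f \<in> stab (dgp_edges n k)"
    using f by (auto simp: autB_eq)
  have inj: "inj_on f (dgp_verts n)" using fE by (simp add: edge_stabilizer_def Bij_def bij_betw_def)
  obtain a b where fv: "f (V 0 1) = U a b"
    using outer_vertex_eq_U[OF autB_maps_verts[OF f V_in_verts]] sw by fastforce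
  have to_outer: "{U a b, f (V m 0)} \<in> dgp_outer n" if "{V 0 1, V m 0} \<in> dgp_inner n k" for m
  proof -
    have "{V 0 1, V m 0} \<in> dgp_edges n k" using that by (simp add: dgp_edges_def)
    then have "{U a b, f (V m 0)} \<in> dgp_edges n k"
      using edge_stabilizer_edge[OF fE edges_pairs] fv by metis
    then show ?thesis using dgp_edge_kind(1) fV by simp
  qed
  have "{V 0 1, V k 0} \<in> dgp_inner n k" "{V 0 1, V (-k) 0} \<in> dgp_inner n k"
    by (simp_all add: inner_edge_V_iff V_eq_iff)
  moreover have "f (V k 0) \<noteq> f (V (-k) 0)"
    using V_2k_apart[of 0 0] inj by (simp add: inj_on_eq_iff)
  ultimately obtain u where u: "u \<in> {1, -1}" and "f (V k 0) = U (a + u) b" "f (V (-k) 0) = U (a - u) b"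
    using distinct_outer_neighbours[OF to_outer to_outer] by blast
  then have "n dvd c + k * r - (a + u)" "n dvd c + (-k) * r - (a - u)"
    using fV by (simp_all add: U_eq_iff)
  then have "n dvd (c + k * r - (a + u)) - (c + (-k) * r - (a - u))"
    by (rule dvd_diff)
  moreover have "(c + k * r - (a + u)) - (c + (-k) * r - (a - u)) = 2 * (k * r - u)"
    by (simp add: algebra_simps)
  ultimately show ?thesis
    using cong_of_dvd_double_diff[OF r u] by simp
qed

section \<open>Generators\<close>

abbreviation rdb_group :: "(dvert \<Rightarrow> dvert) set" where
  "rdb_group \<equiv> generate (dgp_sym n) {rho n, delta n, beta n}"

lemma autC_subset_Bij: "autC n k \<subseteq> Bij (dgp_verts n)"
  using subgroup.subset[OF subgroup_autC] by simp

lemma subgroup_rdb_group: "subgroup rdb_group (dgp_sym n)"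
  using rho_in_autC delta_in_autC beta_in_autC autC_subset_Bij
  by (intro group.generate_is_subgroup[OF group_BijGroup]) auto

lemma rdb_group_subset_autC: "rdb_group \<subseteq> autC n k"
  using rho_in_autC delta_in_autC beta_in_autC
  by (intro group.generate_subgroup_incl[OF group_BijGroup _ subgroup_autC]) auto

lemma autC_mult_apply:
  "g \<in> autC n k \<Longrightarrow> h \<in> autC n k \<Longrightarrow> x \<in> dgp_verts n \<Longrightarrow> (g \<otimes>\<^bsub>dgp_sym n\<^esub> h) x = g (h x)"
  using autC_subset_Bij by (intro BijGroup_mult_apply) auto

lemma rdb_group_apply:
  "g \<in> rdb_group \<Longrightarrow> h \<in> rdb_group \<Longrightarrow> x \<in> dgp_verts n \<Longrightarrow> (g \<otimes>\<^bsub>dgp_sym n\<^esub> h) x = g (h x)"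
  using rdb_group_subset_autC by (intro autC_mult_apply) auto

lemma rdb_group_shift: "\<exists>h\<in>rdb_group. \<forall>m e. h (U m e) = U (m + int j) (e + int j)"
proof (induction j)
  case 0
  have "\<one>\<^bsub>dgp_sym n\<^esub> \<in> rdb_group" by (rule generate.one)
  moreover have "\<one>\<^bsub>dgp_sym n\<^esub> (U m e) = U m e" for m e by (simp add: BijGroup_one)
  ultimately show ?case by auto
next
  case (Suc j)
  then obtain h where h: "h \<in> rdb_group" "\<forall>m e. h (U m e) = U (m + int j) (e + int j)" by blast
  have rho: "rho n \<in> rdb_group" by (auto intro: generate.incl)
  have "h \<otimes>\<^bsub>dgp_sym n\<^esub> rho n \<in> rdb_group"
    using subgroup.m_closed[OF subgroup_rdb_group h(1) rho] .
  moreover have "(h \<otimes>\<^bsub>dgp_sym n\<^esub> rho n) (U m e) = U (m + int (Suc j)) (e + int (Suc j))" for m e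
    using h rho by (simp add: rdb_group_apply rho_U algebra_simps)
  ultimately show ?case by blast
qed

lemma rdb_group_transitive_U: "\<exists>h\<in>rdb_group. h (U a b) = U 0 0"
proof -
  define j where "j = nat ((- a) mod n)"
  have j: "int j = (- a) mod n" using n_pos by (simp add: j_def)
  obtain h where h: "h \<in> rdb_group" "\<forall>m e. h (U m e) = U (m + int j) (e + int j)"
    using rdb_group_shift by blast
  define b' where "b' = b + int j"
  have "n dvd a + (- a) mod n" by (metis dvd_mod_iff dvd_refl mod_add_right_eq add.right_inverse dvd_0_right)
  then have hab: "h (U a b) = U 0 b'"
    using h(2) by (simp add: U_eq_iff j b'_def)
  have beta: "beta n \<in> rdb_group" by (auto intro: generate.incl)
  show ?thesis
  proof (cases "even b'")
    case True
    then have "U 0 b' = U 0 0" by (simp add: U_eq_iff)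
    then show ?thesis using h(1) hab by auto
  next
    case False
    have "(beta n \<otimes>\<^bsub>dgp_sym n\<^esub> h) (U a b) = U 0 0"
      using beta h(1) hab False by (simp add: rdb_group_apply beta_U U_eq_iff)
    then show ?thesis using subgroup.m_closed[OF subgroup_rdb_group beta h(1)] by blast
  qed
qed

lemma common_inner_neighbour:
  assumes "\<not> n dvd 4 * k"
    and "{V (m + k) 1, y} \<in> dgp_inner n k" and "{V (m - k) 1, y} \<in> dgp_inner n k"
  shows "y = V m 0"
proof -
  have "y = V (m + k + k) 0 \<or> y = V m 0" "y = V m 0 \<or> y = V (m - k - k) 0"
    using assms(2,3) by (auto simp: inner_edge_V_iff V_eq_iff)
  moreover have "V (m + k + k) 0 \<noteq> V (m - k - k) 0"
    using assms(1) by (simp add: V_eq_iff)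
  ultimately show ?thesis by blast
qed

lemma autC_fixing_outer_cycle_id:
  assumes f: "f \<in> autC n k" and n4: "\<not> n dvd 4 * k" and fixed: "\<And>m. f (U m 0) = U m 0"
  shows "f = \<one>\<^bsub>dgp_sym n\<^esub>"
proof -
  have fI: "f \<in> stab (dgp_inner n k)" and fS: "f \<in> stab (dgp_spokes n)"
    using f by (auto simp: autC_eq)
  note spoke = edge_stabilizer_edge[OF fS spokes_pairs]
  note inner = edge_stabilizer_edge[OF fI inner_pairs]
  have V1: "f (V m 1) = V m 1" for m
    using spoke[of "U m 0" "V m 1"] fixed[of m] by (simp add: spoke_U_iff)
  have V0: "f (V m 0) = V m 0" for m
    using inner[of "V (m + k) 1" "V m 0"] inner[of "V (m - k) 1" "V m 0"] V1
    by (intro common_inner_neighbour[OF n4]) (simp_all add: inner_edge_V_iff V_eq_iff)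
  have U1: "f (U m 1) = U m 1" for m
    using spoke[of "V m 0" "U m 1"] V0[of m] by (simp add: spoke_V_iff)
  have "f x = x" if "x \<in> dgp_verts n" for x
    using that fixed U1 V0 V1 U_parity_cases V_parity_cases by (elim verts_cases) metis+
  moreover have "f \<in> extensional (dgp_verts n)"
    using f autC_subset_Bij Bij_imp_extensional by blast
  ultimately show ?thesis
    by (intro extensionalityI[where A = "dgp_verts n"]) (simp_all add: BijGroup_one)
qed

lemma autC_fixing_outer_edge_id:
  assumes f: "f \<in> autC n k" and n4: "\<not> n dvd 4 * k"
    and f0: "f (U 0 0) = U 0 0" and f1: "f (U 1 0) = U 1 0"
  shows "f = \<one>\<^bsub>dgp_sym n\<^esub>"
proof (rule autC_fixing_outer_cycle_id[OF f n4])
  have fO: "f \<in> stab (dgp_outer n)" using f by (auto simp: autC_eq)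
  have inj: "inj_on f (dgp_verts n)"
    using f autC_subset_Bij by (auto simp: Bij_def bij_betw_def)
  fix m
  show "f (U m 0) = U m 0"
  proof (rule nonbacktracking_walk_eq[where R = "dgp_outer n" and g = "\<lambda>m. f (U m 0)"])
    show "{f (U m 0), f (U (m + 1) 0)} \<in> dgp_outer n" for m
      by (rule edge_stabilizer_edge[OF fO outer_pairs]) (simp add: outer_edge_U_iff)
    show "f (U (m + 1) 0) \<noteq> f (U (m - 1) 0)" for m
      using U_two_apart inj by (simp add: inj_on_eq_iff)
  qed (simp_all add: f0 f1 outer_edge_U_iff)
qed

lemma autC_fixing_base_in_rdb_group:
  assumes f: "f \<in> autC n k" and n4: "\<not> n dvd 4 * k" and f0: "f (U 0 0) = U 0 0"
  shows "f \<in> rdb_group"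
proof -
  have "{U 0 0, f (U 1 0)} \<in> dgp_outer n"
    using f f0 edge_stabilizer_edge[OF _ outer_pairs, of f "U 0 0" "U 1 0"]
    by (auto simp: autC_eq outer_edge_U_iff)
  then have f1: "f (U 1 0) = U 1 0 \<or> f (U 1 0) = U (-1) 0"
    by (simp add: outer_edge_U_iff)
  obtain h where h: "h \<in> rdb_group" "h (U 0 0) = U 0 0" "h (f (U 1 0)) = U 1 0"
  proof (cases "f (U 1 0) = U 1 0")
    case True
    have "\<one>\<^bsub>dgp_sym n\<^esub> \<in> rdb_group" by (rule generate.one)
    then show ?thesis using that True by (simp add: BijGroup_one)
  next
    case False
    have "delta n \<in> rdb_group" by (auto intro: generate.incl)
    then show ?thesis using that False f1 by (simp add: delta_U)
  qed
  have hC: "h \<in> autC n k" using h(1) rdb_group_subset_autC by blast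
  have "h \<otimes>\<^bsub>dgp_sym n\<^esub> f = \<one>\<^bsub>dgp_sym n\<^esub>"
    using subgroup.m_closed[OF subgroup_autC hC f] n4 h f0
    by (intro autC_fixing_outer_edge_id) (simp_all add: autC_mult_apply[OF hC f])
  then have "h \<otimes>\<^bsub>dgp_sym n\<^esub> f \<in> rdb_group" by (simp add: generate.one)
  then show ?thesis
    using group.subgroup_mem_of_mult[OF group_BijGroup subgroup_rdb_group h(1)] f autC_subset_Bij
    by auto
qed

lemma autC_subset_rdb_group:
  assumes n4: "\<not> n dvd 4 * k"
  shows "autC n k \<subseteq> rdb_group"
proof
  fix f assume f: "f \<in> autC n k"
  have "f (U 0 0) \<in> dgp_verts n"
    using f autC_subset_Bij Bij_imp_funcset by fastforce
  then obtain a b where fab: "f (U 0 0) = U a b"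
    using outer_vertex_eq_U autC_outer_vertex[OF f] by blast
  obtain h where h: "h \<in> rdb_group" "h (U a b) = U 0 0"
    using rdb_group_transitive_U by blast
  have hC: "h \<in> autC n k" using h(1) rdb_group_subset_autC by blast
  have "h \<otimes>\<^bsub>dgp_sym n\<^esub> f \<in> rdb_group"
    using subgroup.m_closed[OF subgroup_autC hC f] n4 h fab
    by (intro autC_fixing_base_in_rdb_group) (simp_all add: autC_mult_apply[OF hC f])
  then show "f \<in> rdb_group"
    using group.subgroup_mem_of_mult[OF group_BijGroup subgroup_rdb_group h(1)] f autC_subset_Bij
    by auto
qed

lemma not_dvd_4k_if_cong:
  assumes s: "s \<in> {1, -1}" and cong: "n div 2 dvd k^2 - s"
  shows "\<not> n dvd 4 * k"
proof
  assume "n dvd 4 * k"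
  then have "n div 2 dvd 2 * k" using half_dvd_of_dvd_double[of "2 * k"] by simp
  then have "n div 2 dvd 2 * k * k" by (rule dvd_mult2)
  moreover have "n div 2 dvd 2 * (k^2 - s)" using cong by (rule dvd_mult)
  ultimately have "n div 2 dvd 2 * k * k - 2 * (k^2 - s)" by (rule dvd_diff)
  moreover have "2 * k * k - 2 * (k^2 - s) = 2 * s"
    by (simp add: power2_eq_square algebra_simps)
  ultimately have "n div 2 dvd 2 * s" by metis
  then have "n div 2 dvd 2" using s by auto
  then show False using n_ge_6 zdvd_imp_le[of "n div 2" 2] by simp
qed

lemma Lam_swaps_sides: "odd s \<Longrightarrow> x \<in> dgp_verts n \<Longrightarrow> outer_vertex (Lam s x) \<noteq> outer_vertex x"
  by (elim verts_cases) (simp_all add: Lam_U Lam_V)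

lemma autB_subset_subgroup:
  assumes s: "s \<in> {1, -1}" and cong: "n div 2 dvd k^2 - s"
    and K: "subgroup K (dgp_sym n)" and CK: "autC n k \<subseteq> K" and LK: "Lam s \<in> K"
  shows "autB n k \<subseteq> K"
proof
  fix f assume f: "f \<in> autB n k"
  from autB_preserves_or_swaps_sides[OF f] show "f \<in> K"
  proof
    assume "\<forall>x\<in>dgp_verts n. outer_vertex (f x) = outer_vertex x"
    then show ?thesis using side_preserving_autB_in_autC[OF f] CK by blast
  next
    assume sw: "\<forall>x\<in>dgp_verts n. outer_vertex (f x) \<noteq> outer_vertex x"
    have L: "Lam s \<in> autB n k" by (rule Lam_in_autB[OF s cong])
    have Bij: "autB n k \<subseteq> Bij (dgp_verts n)" using subgroup.subset[OF subgroup_autB] by simp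
    let ?g = "Lam s \<otimes>\<^bsub>dgp_sym n\<^esub> f"
    have "outer_vertex (?g x) = outer_vertex x" if x: "x \<in> dgp_verts n" for x
    proof -
      have "?g x = Lam s (f x)" using BijGroup_mult_apply[OF subsetD[OF Bij L] subsetD[OF Bij f] x] .
      moreover have "outer_vertex (Lam s (f x)) \<noteq> outer_vertex (f x)"
        using Lam_swaps_sides autB_maps_verts[OF f x] s by auto
      ultimately show ?thesis using sw x by auto
    qed
    then have "?g \<in> autC n k"
      using side_preserving_autB_in_autC subgroup.m_closed[OF subgroup_autB L f] by blast
    then show ?thesis
      using group.subgroup_mem_of_mult[OF group_BijGroup K LK] CK f Bij by auto
  qed
qed

lemma autB_eq_generate:
  assumes s: "s \<in> {1, -1}" and cong: "n div 2 dvd k^2 - s"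
  shows "autB n k = generate (dgp_sym n) (autC n k \<union> {Lam s})"
    and "autB n k = generate (dgp_sym n) {rho n, delta n, beta n, Lam s}"
proof -
  have grp: "group (dgp_sym n)" by (rule group_BijGroup)
  have L: "Lam s \<in> autB n k" by (rule Lam_in_autB[OF s cong])
  have Bij: "autB n k \<subseteq> carrier (dgp_sym n)" using subgroup.subset[OF subgroup_autB] .
  have eq: "autB n k = generate (dgp_sym n) S"
    if S: "S \<subseteq> autB n k" "Lam s \<in> S" and CS: "autC n k \<subseteq> generate (dgp_sym n) S" for S
  proof
    show "generate (dgp_sym n) S \<subseteq> autB n k"
      by (rule group.generate_subgroup_incl[OF grp S(1) subgroup_autB])
    show "autB n k \<subseteq> generate (dgp_sym n) S"
      using S Bij by (intro autB_subset_subgroup[OF s cong _ CS] group.generate_is_subgroup[OF grp])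
        (auto intro: generate.incl)
  qed
  show "autB n k = generate (dgp_sym n) (autC n k \<union> {Lam s})"
    using L autC_subset_autB by (intro eq) (auto intro: generate.incl)
  have "autC n k \<subseteq> generate (dgp_sym n) {rho n, delta n, beta n, Lam s}"
    using autC_subset_rdb_group[OF not_dvd_4k_if_cong[OF s cong]]
      group.mono_generate[OF grp, of "{rho n, delta n, beta n}" "{rho n, delta n, beta n, Lam s}"]
    by blast
  then show "autB n k = generate (dgp_sym n) {rho n, delta n, beta n, Lam s}"
    using L rho_in_autC delta_in_autC beta_in_autC autC_subset_autB by (intro eq) auto
qed

lemma autB_neq_autC_iff: "autB n k \<noteq> autC n k \<longleftrightarrow> (\<exists>s\<in>{1, -1}. n div 2 dvd k^2 - s)"
proof
  assume "autB n k \<noteq> autC n k"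
  then obtain f where f: "f \<in> autB n k" "f \<notin> autC n k" using autC_subset_autB by blast
  then have "\<forall>x\<in>dgp_verts n. outer_vertex (f x) \<noteq> outer_vertex x"
    using autB_preserves_or_swaps_sides[OF f(1)] side_preserving_autB_in_autC by blast
  then show "\<exists>s\<in>{1, -1}. n div 2 dvd k^2 - s" by (rule side_swapping_cong[OF f(1)])
next
  assume "\<exists>s\<in>{1, -1}. n div 2 dvd k^2 - s"
  then show "autB n k \<noteq> autC n k" using Lam_in_autB Lam_notin_autC by blast
qed

end

theorem lemma5p4:
  fixes n k :: int
  assumes "even n" and "even k" and "1 \<le> k" and "2 * k < n"
  shows "(autB n k \<noteq> autC n k \<longleftrightarrow>
            ([k^2 = 1] (mod (n div 2)) \<or> [k^2 = -1] (mod (n div 2))))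
       \<and> ([k^2 = 1] (mod (n div 2)) \<longrightarrow>
            autB n k = generate (dgp_sym n) (autC n k \<union> {lam n k})
          \<and> autB n k = generate (dgp_sym n) {rho n, delta n, beta n, lam n k})
       \<and> ([k^2 = -1] (mod (n div 2)) \<longrightarrow>
            autB n k = generate (dgp_sym n) (autC n k \<union> {tau n k})
          \<and> autB n k = generate (dgp_sym n) {rho n, delta n, beta n, tau n k})"
proof -
  interpret even_dgp n k using assms by unfold_locales
  have cong_iff: "[k^2 = s] (mod (n div 2)) \<longleftrightarrow> n div 2 dvd k^2 - s" for s
    by (rule cong_iff_dvd_diff)
  have "autB n k \<noteq> autC n k \<longleftrightarrow> n div 2 dvd k^2 - 1 \<or> n div 2 dvd k^2 - (-1)"
    using autB_neq_autC_iff by simp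
  moreover have "n div 2 dvd k^2 - 1 \<Longrightarrow>
      autB n k = generate (dgp_sym n) (autC n k \<union> {lam n k})
    \<and> autB n k = generate (dgp_sym n) {rho n, delta n, beta n, lam n k}"
    using autB_eq_generate[of 1] unfolding lam_eq_Lam by simp
  moreover have "n div 2 dvd k^2 - (-1) \<Longrightarrow>
      autB n k = generate (dgp_sym n) (autC n k \<union> {tau n k})
    \<and> autB n k = generate (dgp_sym n) {rho n, delta n, beta n, tau n k}"
    using autB_eq_generate[of "-1"] unfolding tau_eq_Lam by simp
  ultimately show ?thesis unfolding cong_iff by blast
qed

end
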